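(* Let $G_7=K_1+P_6$ be the graph obtained from the path $P_6$ on six vertices by adding one new vertex adjacent to all six vertices of the path. Then $G_7$ is outerplanar and $\chi_{\mathrm{so}}(G_7)=7$.
   Context: All graphs are finite, simple and undirected. A strong odd coloring of a graph $G$ is a proper vertex coloring of $G$ such that for every non-isolated vertex $v$ and every color $c$, either no vertex of the open neighborhood $N_G(v)$ has color $c$, or color $c$ is used on an odd number of vertices of $N_G(v)$. The strong odd chromatic number $\chi_{\mathrm{so}}(G)$ is the minimum number of colors in a strong odd coloring of $G$. A graph is outerplanar if it has a plane embedding in which all vertices lie on the boundary of a single face. *)

theory Defs
  imports "HOL-Analysis.Analysis"
begin

definition simple_graph :: "'a set \<Rightarrow> ('a \<Rightarrow> 'a \<Rightarrow> bool) \<Rightarrow> bool" where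
  "simple_graph V E \<longleftrightarrow> finite V \<and> (\<forall>u v. E u v \<longrightarrow> u \<in> V \<and> v \<in> V \<and> u \<noteq> v \<and> E v u)"

definition nbhd :: "'a set \<Rightarrow> ('a \<Rightarrow> 'a \<Rightarrow> bool) \<Rightarrow> 'a \<Rightarrow> 'a set" where
  "nbhd V E v = {u \<in> V. E v u}"

definition strong_odd_coloring :: "'a set \<Rightarrow> ('a \<Rightarrow> 'a \<Rightarrow> bool) \<Rightarrow> ('a \<Rightarrow> nat) \<Rightarrow> bool" where
  "strong_odd_coloring V E c \<longleftrightarrow>
     (\<forall>u\<in>V. \<forall>v\<in>V. E u v \<longrightarrow> c u \<noteq> c v) \<and>
     (\<forall>v\<in>V. nbhd V E v \<noteq> {} \<longrightarrow>
        (\<forall>k. card {u \<in> nbhd V E v. c u = k} = 0 \<or> odd (card {u \<in> nbhd V E v. c u = k})))"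

definition chi_so :: "'a set \<Rightarrow> ('a \<Rightarrow> 'a \<Rightarrow> bool) \<Rightarrow> nat" where
  "chi_so V E = (LEAST k. \<exists>c. strong_odd_coloring V E c \<and> card (c ` V) = k)"

text \<open>Outerplanar: there is such an embedding and a face (connected component of the
complement of the drawing) whose boundary contains all vertices.\<close>

definition plane_embedding ::
  "'a set \<Rightarrow> ('a \<Rightarrow> 'a \<Rightarrow> bool) \<Rightarrow> ('a \<Rightarrow> complex) \<Rightarrow> ('a set \<Rightarrow> real \<Rightarrow> complex) \<Rightarrow> bool" where
  "plane_embedding V E p \<gamma> \<longleftrightarrow>
     inj_on p V \<and>
     (\<forall>u v. E u v \<longrightarrow> arc (\<gamma> {u,v}) \<and>
        {pathstart (\<gamma> {u,v}), pathfinish (\<gamma> {u,v})} = {p u, p v}) \<and>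
     (\<forall>u v w. E u v \<longrightarrow> w \<in> V \<longrightarrow> p w \<in> path_image (\<gamma> {u,v}) \<longrightarrow> w = u \<or> w = v) \<and>
     (\<forall>u v x y. E u v \<longrightarrow> E x y \<longrightarrow> {u,v} \<noteq> {x,y} \<longrightarrow>
        path_image (\<gamma> {u,v}) \<inter> path_image (\<gamma> {x,y}) \<subseteq> p ` ({u,v} \<inter> {x,y}))"

definition drawing ::
  "'a set \<Rightarrow> ('a \<Rightarrow> 'a \<Rightarrow> bool) \<Rightarrow> ('a \<Rightarrow> complex) \<Rightarrow> ('a set \<Rightarrow> real \<Rightarrow> complex) \<Rightarrow> complex set" where
  "drawing V E p \<gamma> = p ` V \<union> \<Union> {path_image (\<gamma> {u,v}) | u v. E u v}"

definition outerplanar :: "'a set \<Rightarrow> ('a \<Rightarrow> 'a \<Rightarrow> bool) \<Rightarrow> bool" where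
  "outerplanar V E \<longleftrightarrow> (\<exists>p \<gamma>. plane_embedding V E p \<gamma> \<and>
     (\<exists>F \<in> components (- drawing V E p \<gamma>). p ` V \<subseteq> frontier F))"

text \<open>G7 = K1 + P6: vertex 0 is the apex, vertices 1,...,6 form the path 1-2-3-4-5-6.\<close>

definition G7V :: "nat set" where
  "G7V = {0..6}"

definition G7E :: "nat \<Rightarrow> nat \<Rightarrow> bool" where
  "G7E u v \<longleftrightarrow> u \<in> G7V \<and> v \<in> G7V \<and> u \<noteq> v \<and> (u = 0 \<or> v = 0 \<or> u = v + 1 \<or> v = u + 1)"

end

theory Submission
  imports Defs
begin

text \<open>Draw vertex \<open>n\<close> at the point \<open>(n, n\<^sup>2)\<close> of the parabola \<open>y = x\<^sup>2\<close> and every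
edge as a straight chord. A point of the chord over \<open>[a, b]\<close> satisfies
\<open>y = x\<^sup>2 + (x - a) (b - x)\<close>, so the drawing lies on or above the parabola, and two chords
whose intervals do not interleave meet only in a common endpoint. The open region below
the parabola misses the drawing, is connected and has every vertex on its boundary, so it
lies in one face incident to all vertices. The edges of \<open>K\<^sub>1 + P\<^sub>6\<close> (apex 0) never interleave.

In a strong odd colouring no colour occurs exactly twice in a neighbourhood. Applied to the
neighbourhoods \<open>{0, i, i + 2}\<close> of the inner path vertices this gives distinct colours to path
vertices at distance at most 2; applied to the neighbourhood \<open>{1..6}\<close> of the apex, a
repeated colour on the path would occur on at least three vertices pairwise at distance at
least 3, which six vertices cannot accommodate. Hence every strong odd colouring of
\<open>K\<^sub>1 + P\<^sub>6\<close> is injective.\<close>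

lemma nested_parabola_chords_meet:
  fixes a b c d x :: real
  assumes "c \<le> a" "a \<le> x" "x \<le> b" "b \<le> d" "(a, b) \<noteq> (c, d)"
    and "(x - a) * (b - x) = (x - c) * (d - x)"
  shows "x \<in> {a, b} \<inter> {c, d}"
proof -
  have "(x - c) * (d - x) - (x - a) * (b - x) = (a - c) * (d - x) + (x - a) * (d - b)"
    by (simp add: algebra_simps)
  moreover have "(a - c) * (d - x) \<ge> 0" "(x - a) * (d - b) \<ge> 0"
    using assms(1-4) by simp_all
  ultimately have "(a - c) * (d - x) = 0" "(x - a) * (d - b) = 0"
    using assms(6) by linarith+
  then show ?thesis
    using assms(1-5) by auto
qed

lemma parabola_chords_meet:
  fixes a b c d x :: real
  assumes "a \<le> x" "x \<le> b" "c \<le> x" "x \<le> d" "(a, b) \<noteq> (c, d)"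
    and "\<not> (a < c \<and> c < b \<and> b < d)" "\<not> (c < a \<and> a < d \<and> d < b)"
    and "(x - a) * (b - x) = (x - c) * (d - x)"
  shows "x \<in> {a, b} \<inter> {c, d}"
proof -
  consider "b \<le> c" | "d \<le> a" | "c \<le> a" "b \<le> d" | "a \<le> c" "d \<le> b"
    using assms(6,7) by linarith
  then show ?thesis
  proof cases
    case 3
    then show ?thesis using nested_parabola_chords_meet assms by blast
  next
    case 4
    then show ?thesis using nested_parabola_chords_meet[of a c x d b] assms by auto
  qed (use assms(1-4) in auto)
qed

definition parabola :: "real \<Rightarrow> complex" where
  "parabola x = Complex x (x\<^sup>2)"

lemma parabola_inj: "parabola x = parabola y \<longleftrightarrow> x = y"
  by (auto simp: parabola_def complex_eq_iff)

lemma closed_segment_parabola: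
  assumes "a \<le> b" "z \<in> closed_segment (parabola a) (parabola b)"
  shows "a \<le> Re z \<and> Re z \<le> b \<and> Im z = (Re z)\<^sup>2 + (Re z - a) * (b - Re z)"
proof -
  obtain t where t: "0 \<le> t" "t \<le> 1" "z = (1 - t) *\<^sub>R parabola a + t *\<^sub>R parabola b"
    using assms(2) unfolding closed_segment_def by blast
  have re: "Re z = a + t * (b - a)" and im: "Im z = (1 - t) * a\<^sup>2 + t * b\<^sup>2"
    unfolding t(3) by (simp_all add: parabola_def algebra_simps)
  have "0 \<le> t * (b - a)" "t * (b - a) \<le> b - a"
    using t assms(1) by (simp_all add: mult_left_le_one_le)
  moreover have "Im z = (Re z)\<^sup>2 + (Re z - a) * (b - Re z)"
    unfolding re im by (simp add: algebra_simps power2_eq_square)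
  ultimately show ?thesis
    unfolding re by simp
qed

definition parabola_chord :: "nat set \<Rightarrow> real \<Rightarrow> complex" where
  "parabola_chord S = linepath (parabola (Min S)) (parabola (Max S))"

lemma parabola_chord_ordered:
  "a \<le> b \<Longrightarrow> parabola_chord {a, b} = linepath (parabola a) (parabola b)"
  by (simp add: parabola_chord_def max_def min_def)

lemma path_image_parabola_chord:
  assumes "a \<le> b" "z \<in> path_image (parabola_chord {a, b})"
  shows "a \<le> Re z \<and> Re z \<le> b \<and> Im z = (Re z)\<^sup>2 + (Re z - a) * (b - Re z)"
  using closed_segment_parabola[of a b z] assms by (simp add: parabola_chord_ordered)

definition noncrossing :: "(nat \<Rightarrow> nat \<Rightarrow> bool) \<Rightarrow> bool" where
  "noncrossing E \<longleftrightarrow> (\<forall>a b c d. E a b \<longrightarrow> E c d \<longrightarrow> \<not> (a < c \<and> c < b \<and> b < d))"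

lemma simple_graph_edge_ordered:
  fixes u v :: "'a :: linorder"
  assumes "simple_graph V E" "E u v"
  obtains a b where "{u, v} = {a, b}" "a < b" "E a b"
proof (cases "u < v")
  case True
  then show ?thesis using that assms(2) by blast
next
  case False
  have "u \<noteq> v" "E v u"
    using assms unfolding simple_graph_def by auto
  with False have "v < u"
    by (metis linorder_neqE)
  with \<open>E v u\<close> show ?thesis
    using that[of v u] by (simp add: insert_commute)
qed

lemma plane_embedding_parabola:
  assumes graph: "simple_graph V E" and nc: "noncrossing E"
  shows "plane_embedding V E (parabola \<circ> real) parabola_chord"
  unfolding plane_embedding_def
proof (intro conjI allI impI)
  show "inj_on (parabola \<circ> real) V"
    by (simp add: inj_on_def parabola_inj)
next
  fix u v assume "E u v"
  obtain a b where ab: "{u, v} = {a, b}" "a < b" "E a b"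
    using graph \<open>E u v\<close> by (rule simple_graph_edge_ordered)
  then show "arc (parabola_chord {u, v})"
    by (simp add: parabola_chord_ordered parabola_inj)
  show "{pathstart (parabola_chord {u, v}), pathfinish (parabola_chord {u, v})} =
      {(parabola \<circ> real) u, (parabola \<circ> real) v}"
    using ab(1)[unfolded doubleton_eq_iff] ab(2)
    unfolding ab(1) by (auto simp: parabola_chord_ordered)
next
  fix u v w assume "E u v" "(parabola \<circ> real) w \<in> path_image (parabola_chord {u, v})"
  moreover obtain a b where ab: "{u, v} = {a, b}" "a < b" "E a b"
    using graph \<open>E u v\<close> by (rule simple_graph_edge_ordered)
  ultimately have "(real w - a) * (b - real w) = 0"
    using path_image_parabola_chord[of a b "parabola w"] by (simp add: parabola_def)
  then show "w = u \<or> w = v"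
    using ab by auto
next
  fix u v x y assume "E u v" "E x y" and different: "{u, v} \<noteq> {x, y}"
  obtain a b where ab: "{u, v} = {a, b}" "a < b" "E a b"
    using graph \<open>E u v\<close> by (rule simple_graph_edge_ordered)
  obtain c d where cd: "{x, y} = {c, d}" "c < d" "E c d"
    using graph \<open>E x y\<close> by (rule simple_graph_edge_ordered)
  show "path_image (parabola_chord {u, v}) \<inter> path_image (parabola_chord {x, y}) \<subseteq>
      (parabola \<circ> real) ` ({u, v} \<inter> {x, y})"
  proof
    fix z assume "z \<in> path_image (parabola_chord {u, v}) \<inter> path_image (parabola_chord {x, y})"
    then have on_ab: "a \<le> Re z \<and> Re z \<le> b \<and> Im z = (Re z)\<^sup>2 + (Re z - a) * (b - Re z)"
      and on_cd: "c \<le> Re z \<and> Re z \<le> d \<and> Im z = (Re z)\<^sup>2 + (Re z - c) * (d - Re z)"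
      using ab cd path_image_parabola_chord[of a b z] path_image_parabola_chord[of c d z]
      by auto
    have "(a, b) \<noteq> (c, d)"
      using ab cd different by auto
    moreover have "\<not> (a < c \<and> c < b \<and> b < d)" "\<not> (c < a \<and> a < d \<and> d < b)"
      using nc ab(3) cd(3) unfolding noncrossing_def by blast+
    ultimately have "Re z \<in> {real a, real b} \<inter> {real c, real d}"
      using on_ab on_cd by (intro parabola_chords_meet) auto
    then obtain n where n: "n \<in> {a, b} \<inter> {c, d}" "Re z = real n"
      by auto
    with on_ab have "z = parabola (real n)"
      by (auto simp: parabola_def complex_eq_iff)
    with n ab cd show "z \<in> (parabola \<circ> real) ` ({u, v} \<inter> {x, y})"
      by auto
  qed
qed

lemma drawing_parabola_above:
  assumes "simple_graph V E" "z \<in> drawing V E (parabola \<circ> real) parabola_chord"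
  shows "(Re z)\<^sup>2 \<le> Im z"
  using assms(2) unfolding drawing_def
proof (elim UnE)
  assume "z \<in> (parabola \<circ> real) ` V"
  then show ?thesis by (auto simp: parabola_def)
next
  assume "z \<in> \<Union> {path_image (parabola_chord {u, v}) |u v. E u v}"
  then obtain u v where "E u v" "z \<in> path_image (parabola_chord {u, v})"
    by blast
  moreover obtain a b where "{u, v} = {a, b}" "a < b" "E a b"
    using assms(1) \<open>E u v\<close> by (rule simple_graph_edge_ordered)
  ultimately have "a \<le> Re z \<and> Re z \<le> b \<and> Im z = (Re z)\<^sup>2 + (Re z - a) * (b - Re z)"
    using path_image_parabola_chord[of a b z] by simp
  then show ?thesis by simp
qed

lemma connected_below_parabola: "connected {z. Im z < (Re z)\<^sup>2}"
proof -
  have "{z. Im z < (Re z)\<^sup>2} = (\<lambda>z. Complex (Re z) (Im z + (Re z)\<^sup>2)) ` {z. Im z < 0}"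
  proof (intro set_eqI iffI)
    fix z assume "z \<in> {z. Im z < (Re z)\<^sup>2}"
    then show "z \<in> (\<lambda>z. Complex (Re z) (Im z + (Re z)\<^sup>2)) ` {z. Im z < 0}"
      by (intro image_eqI[where x = "Complex (Re z) (Im z - (Re z)\<^sup>2)"]) auto
  qed auto
  moreover have "continuous_on UNIV (\<lambda>z. Complex (Re z) (Im z + (Re z)\<^sup>2))"
    by (intro continuous_intros)
  then have "connected ((\<lambda>z. Complex (Re z) (Im z + (Re z)\<^sup>2)) ` {z. Im z < 0})"
    using connected_halfspace_Im_lt by (blast intro: connected_continuous_image continuous_on_subset)
  ultimately show ?thesis
    by simp
qed

lemma parabola_in_closure_below: "parabola x \<in> closure {z. Im z < (Re z)\<^sup>2}"
  unfolding closure_approachable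
proof (intro allI impI)
  fix e :: real assume "e > 0"
  then have "parabola x - of_real (e / 2) * \<i> \<in> {z. Im z < (Re z)\<^sup>2}"
    and "dist (parabola x - of_real (e / 2) * \<i>) (parabola x) < e"
    by (simp_all add: parabola_def dist_norm norm_mult)
  then show "\<exists>y \<in> {z. Im z < (Re z)\<^sup>2}. dist y (parabola x) < e"
    by blast
qed

theorem outerplanar_if_noncrossing:
  assumes graph: "simple_graph V E" and "noncrossing E"
  shows "outerplanar V E"
proof -
  define D where "D = drawing V E (parabola \<circ> real) parabola_chord"
  define below where "below = {z. Im z < (Re z)\<^sup>2}"
  have below_D: "below \<subseteq> - D"
    using drawing_parabola_above[OF graph] unfolding D_def below_def by fastforce
  have i_below: "- \<i> \<in> below"
    by (simp add: below_def)
  define F where "F = connected_component_set (- D) (- \<i>)"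
  have "F \<in> components (- D)"
    unfolding F_def using below_D i_below by (intro componentsI) blast
  moreover have "(parabola \<circ> real) ` V \<subseteq> frontier F"
  proof
    fix w assume w: "w \<in> (parabola \<circ> real) ` V"
    have "below \<subseteq> F"
      unfolding F_def using connected_below_parabola below_D i_below
      by (intro connected_component_maximal) (simp_all add: below_def)
    moreover have "w \<in> closure below"
      using w parabola_in_closure_below unfolding below_def by auto
    ultimately have "w \<in> closure F"
      using closure_mono by blast
    moreover have "F \<subseteq> - D"
      unfolding F_def by (rule connected_component_subset)
    moreover have "w \<in> D"
      using w unfolding D_def drawing_def by (rule UnI1)
    ultimately have "w \<in> closure F - interior F"
      using interior_subset[of F] by blast
    then show "w \<in> frontier F"
      by (simp add: frontier_def)
  qed
  ultimately show ?thesis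
    unfolding outerplanar_def D_def
    using plane_embedding_parabola[OF assms] by blast
qed

lemma strong_odd_coloring_if_inj:
  assumes "simple_graph V E" "inj_on c V"
  shows "strong_odd_coloring V E c"
  unfolding strong_odd_coloring_def
proof (intro conjI ballI impI allI)
  fix u v assume "u \<in> V" "v \<in> V" "E u v"
  then show "c u \<noteq> c v"
    using assms unfolding simple_graph_def inj_on_def by blast
next
  fix v k
  have "{u \<in> nbhd V E v. c u = k} = {} \<or> (\<exists>u. {u \<in> nbhd V E v. c u = k} = {u})"
    using assms(2) unfolding nbhd_def inj_on_def by blast
  then show "card {u \<in> nbhd V E v. c u = k} = 0 \<or> odd (card {u \<in> nbhd V E v. c u = k})"
  proof (elim disjE exE)
    assume empty: "{u \<in> nbhd V E v. c u = k} = {}"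
    show ?thesis
      unfolding empty by simp
  next
    fix u assume singleton: "{u \<in> nbhd V E v. c u = k} = {u}"
    show ?thesis
      unfolding singleton by simp
  qed
qed

lemma strong_odd_coloring_class_not_pair:
  assumes "strong_odd_coloring V E c" "v \<in> V" "u \<noteq> w"
  shows "{x \<in> nbhd V E v. c x = k} \<noteq> {u, w}"
proof
  assume pair: "{x \<in> nbhd V E v. c x = k} = {u, w}"
  then have "nbhd V E v \<noteq> {}"
    by blast
  then have "card {x \<in> nbhd V E v. c x = k} = 0 \<or> odd (card {x \<in> nbhd V E v. c x = k})"
    using assms(1,2) unfolding strong_odd_coloring_def by blast
  then show False
    using assms(3) unfolding pair by simp
qed

lemma chi_so_eq_card:
  assumes graph: "simple_graph V E"
    and inj: "\<And>c. strong_odd_coloring V E c \<Longrightarrow> inj_on c V"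
  shows "chi_so V E = card V"
  unfolding chi_so_def
proof (rule Least_equality)
  obtain f :: "'a \<Rightarrow> nat" where "inj_on f V"
    using graph finite_imp_inj_to_nat_seg unfolding simple_graph_def by metis
  then show "\<exists>c. strong_odd_coloring V E c \<and> card (c ` V) = card V"
    using strong_odd_coloring_if_inj[OF graph] card_image by blast
next
  fix k assume "\<exists>c. strong_odd_coloring V E c \<and> card (c ` V) = k"
  then obtain c where "strong_odd_coloring V E c" "card (c ` V) = k"
    by blast
  then show "card V \<le> k"
    using card_image[OF inj] by simp
qed

lemma simple_graph_G7: "simple_graph G7V G7E"
  unfolding simple_graph_def G7E_def G7V_def by auto

lemma noncrossing_G7: "noncrossing G7E"
  unfolding noncrossing_def G7E_def by auto

lemma G7_nbhd_apex: "nbhd G7V G7E 0 = {1..6}"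
  unfolding nbhd_def G7E_def G7V_def by auto

lemma G7_nbhd_path:
  assumes "1 \<le> i" "i + 2 \<le> 6"
  shows "nbhd G7V G7E (i + 1) = {0, i, i + 2}"
  using assms unfolding nbhd_def G7E_def G7V_def by auto

lemma G7_strong_odd_coloring_proper:
  "strong_odd_coloring G7V G7E c \<Longrightarrow> G7E x y \<Longrightarrow> c x \<noteq> c y"
  unfolding strong_odd_coloring_def G7E_def by blast

lemma G7_path_same_color_far:
  assumes soc: "strong_odd_coloring G7V G7E c"
    and "i \<in> {1..6}" "j \<in> {1..6}" "i < j" "c i = c j"
  shows "i + 3 \<le> j"
proof -
  note proper = G7_strong_odd_coloring_proper[OF soc]
  have "j \<noteq> i + 1"
    using proper[of i "i + 1"] assms(2-5) by (auto simp: G7E_def G7V_def)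
  moreover have "j \<noteq> i + 2"
  proof
    assume j: "j = i + 2"
    have "c 0 \<noteq> c i"
      using proper[of 0 i] assms(2) by (auto simp: G7E_def G7V_def)
    moreover have "nbhd G7V G7E (i + 1) = {0, i, i + 2}"
      using assms(2,3) j by (intro G7_nbhd_path) auto
    ultimately have "{x \<in> nbhd G7V G7E (i + 1). c x = c i} = {i, i + 2}"
      using assms(5) j by auto
    moreover have "{x \<in> nbhd G7V G7E (i + 1). c x = c i} \<noteq> {i, i + 2}"
      using assms(3) j
      by (intro strong_odd_coloring_class_not_pair[OF soc]) (auto simp: G7V_def)
    ultimately show False
      by blast
  qed
  ultimately show ?thesis
    using assms(4) by linarith
qed

lemma G7_strong_odd_coloring_inj:
  assumes soc: "strong_odd_coloring G7V G7E c"
  shows "inj_on c G7V"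
proof -
  note proper = G7_strong_odd_coloring_proper[OF soc]
  have "u = v" if "u \<in> G7V" "v \<in> G7V" "u < v" "c u = c v" for u v
  proof (cases "u = 0")
    case True
    then show ?thesis
      using proper[of u v] that by (auto simp: G7E_def)
  next
    case False
    define S where "S = {x \<in> nbhd G7V G7E 0. c x = c u}"
    have "u \<in> S" "v \<in> S"
      using that False unfolding S_def G7_nbhd_apex by (auto simp: G7V_def)
    moreover have "S \<noteq> {u, v}"
      unfolding S_def using that
      by (intro strong_odd_coloring_class_not_pair[OF soc]) (auto simp: G7V_def)
    ultimately obtain w where "w \<in> S" "w \<noteq> u" "w \<noteq> v"
      by blast
    then have path: "u \<in> {1..6}" "v \<in> {1..6}" "w \<in> {1..6}" and "c v = c u" "c w = c u"
      using \<open>u \<in> S\<close> \<open>v \<in> S\<close> by (auto simp: S_def G7_nbhd_apex)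
    then have "u + 3 \<le> v" "u < w \<longrightarrow> u + 3 \<le> w" "w < u \<longrightarrow> w + 3 \<le> u"
      "v < w \<longrightarrow> v + 3 \<le> w" "w < v \<longrightarrow> w + 3 \<le> v"
      using G7_path_same_color_far[OF soc] \<open>u < v\<close> by simp_all
    then show ?thesis
      using path \<open>w \<noteq> u\<close> \<open>w \<noteq> v\<close> by auto
  qed
  then show ?thesis
    unfolding inj_on_def by (metis linorder_neqE_nat)
qed

theorem proposition3p2:
  shows "simple_graph G7V G7E \<and> outerplanar G7V G7E \<and> chi_so G7V G7E = 7"
proof (intro conjI)
  show "simple_graph G7V G7E"
    by (rule simple_graph_G7)
  show "outerplanar G7V G7E"
    using simple_graph_G7 noncrossing_G7 by (rule outerplanar_if_noncrossing)
  have "chi_so G7V G7E = card G7V"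
    using simple_graph_G7 G7_strong_odd_coloring_inj by (rule chi_so_eq_card)
  then show "chi_so G7V G7E = 7"
    by (simp add: G7V_def)
qed

end
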